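(* Let $Q_k$ be a $K$-subset system, $\alpha$ an ordinal and $X$ an $\alpha^k$-special $T_0$ space. Then $\alpha$ is not a limit ordinal.
   Context: For a $K$-subset system $Q_k$ (an assignment $X\mapsto Q_k(X)$ with $\{\uparrow x\}\subseteq Q_k(X)\subseteq Q(X)$, the nonempty compact saturated sets, such that continuous images of $k$-Rudin sets are $k$-Rudin), a nonempty $A\subseteq X$ is $k$-Rudin if for some filtered $\mathcal K\subseteq Q_k(X)$, $\overline A$ is a minimal closed set meeting every member of $\mathcal K$. $K(X)$ is the set of classes of $k$-Rudin sets under $A\sim B\iff\overline A=\overline B$, with open sets $U^*=\{[A]\mid A\cap U\ne\emptyset\}$; $X$ embeds via $x\mapsto[\{x\}]$. $K_0(X)=X$, $K_{\beta+1}(X)=K(K_\beta(X))$, $K_\beta(X)=\bigcup_{\gamma<\beta}K_\gamma(X)$ for limit $\beta$. $\mathrm{rank}_k(X)$ is the least $\alpha$ with $K_\alpha(X)\cong K_{\alpha+1}(X)$. $X$ is $\alpha^k$-special if $\mathrm{rank}_k(X)=\alpha$ and $\alpha$ is the least ordinal for which $K_\alpha(X)$ has a greatest element in its specialization order. *)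

theory Defs
  imports "HOL-Analysis.Analysis"
begin

definition spec_le :: "'a topology \<Rightarrow> 'a \<Rightarrow> 'a \<Rightarrow> bool" where
  "spec_le X x y \<longleftrightarrow> x \<in> topspace X \<and> y \<in> topspace X \<and> x \<in> X closure_of {y}"

definition upset_pt :: "'a topology \<Rightarrow> 'a \<Rightarrow> 'a set" where
  "upset_pt X x = {y. spec_le X x y}"

definition saturated_in :: "'a topology \<Rightarrow> 'a set \<Rightarrow> bool" where
  "saturated_in X K \<longleftrightarrow> K \<subseteq> topspace X \<and>
     K = topspace X \<inter> \<Inter>{U. openin X U \<and> K \<subseteq> U}"

definition Qsets :: "'a topology \<Rightarrow> 'a set set" where
  "Qsets X = {K. K \<noteq> {} \<and> compactin X K \<and> saturated_in X K}"

definition filtered_family :: "'a set set \<Rightarrow> bool" where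
  "filtered_family \<K> \<longleftrightarrow> \<K> \<noteq> {} \<and>
     (\<forall>K1\<in>\<K>. \<forall>K2\<in>\<K>. \<exists>K3\<in>\<K>. K3 \<subseteq> K1 \<inter> K2)"

definition krudin :: "('a topology \<Rightarrow> 'a set set) \<Rightarrow> 'a topology \<Rightarrow> 'a set \<Rightarrow> bool" where
  "krudin Qk X A \<longleftrightarrow> A \<noteq> {} \<and> A \<subseteq> topspace X \<and>
     (\<exists>\<K>. \<K> \<subseteq> Qk X \<and> filtered_family \<K> \<and>
        (\<forall>K\<in>\<K>. X closure_of A \<inter> K \<noteq> {}) \<and>
        (\<forall>B. closedin X B \<and> B \<subseteq> X closure_of A \<and> (\<forall>K\<in>\<K>. B \<inter> K \<noteq> {})
               \<longrightarrow> B = X closure_of A))"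

text \<open>A K-subset system, restricted to the topological spaces carried by the type 'a.\<close>
definition K_subset_system :: "('a topology \<Rightarrow> 'a set set) \<Rightarrow> bool" where
  "K_subset_system Qk \<longleftrightarrow>
     (\<forall>X. (\<forall>x\<in>topspace X. upset_pt X x \<in> Qk X) \<and> Qk X \<subseteq> Qsets X) \<and>
     (\<forall>X Y f A. continuous_map X Y f \<and> krudin Qk X A \<longrightarrow> krudin Qk Y (f ` A))"

text \<open>Points: equivalence classes of k-Rudin sets under equality of closures.\<close>
definition Kclass :: "('a topology \<Rightarrow> 'a set set) \<Rightarrow> 'a topology \<Rightarrow> 'a set \<Rightarrow> 'a set set" where
  "Kclass Qk X A = {B. krudin Qk X B \<and> X closure_of B = X closure_of A}"

definition Kpoints :: "('a topology \<Rightarrow> 'a set set) \<Rightarrow> 'a topology \<Rightarrow> 'a set set set" where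
  "Kpoints Qk X = {Kclass Qk X A | A. krudin Qk X A}"

definition Kstar :: "('a topology \<Rightarrow> 'a set set) \<Rightarrow> 'a topology \<Rightarrow> 'a set \<Rightarrow> 'a set set set" where
  "Kstar Qk X U = {c \<in> Kpoints Qk X. \<exists>A\<in>c. A \<inter> U \<noteq> {}}"

definition Kspace :: "('a topology \<Rightarrow> 'a set set) \<Rightarrow> 'a topology \<Rightarrow> 'a set set topology" where
  "Kspace Qk X = topology_generated_by {Kstar Qk X U | U. openin X U}"

definition Keta :: "('a topology \<Rightarrow> 'a set set) \<Rightarrow> 'a topology \<Rightarrow> 'a \<Rightarrow> 'a set set" where
  "Keta Qk X x = Kclass Qk X {x}"

definition is_zero_ord :: "'o::wellorder \<Rightarrow> bool" where
  "is_zero_ord a \<longleftrightarrow> (\<forall>b. \<not> b < a)"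

definition is_succ_of :: "'o::wellorder \<Rightarrow> 'o \<Rightarrow> bool" where
  "is_succ_of b a \<longleftrightarrow> b < a \<and> (\<forall>d. b < d \<longrightarrow> a \<le> d)"

definition is_limit_ord :: "'o::wellorder \<Rightarrow> bool" where
  "is_limit_ord a \<longleftrightarrow> \<not> is_zero_ord a \<and> \<not> (\<exists>b. is_succ_of b a)"

text \<open>T beta represents K_beta(X) for beta \<le> alpha, all living on one carrier type 'u,
  with K_gamma(X) a subspace of K_delta(X) for gamma \<le> delta.\<close>
definition K_tower ::
  "('u topology \<Rightarrow> 'u set set) \<Rightarrow> 'u topology \<Rightarrow> 'o::wellorder \<Rightarrow> ('o \<Rightarrow> 'u topology) \<Rightarrow> bool" where
  "K_tower Qk X \<alpha> T \<longleftrightarrow>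
     (\<forall>\<beta>\<le>\<alpha>. is_zero_ord \<beta> \<longrightarrow> T \<beta> = X) \<and>
     (\<forall>\<beta> \<gamma>. \<gamma> \<le> \<alpha> \<and> is_succ_of \<beta> \<gamma> \<longrightarrow>
        (\<exists>h. homeomorphic_map (Kspace Qk (T \<beta>)) (T \<gamma>) h \<and>
             (\<forall>x\<in>topspace (T \<beta>). h (Keta Qk (T \<beta>) x) = x))) \<and>
     (\<forall>l\<le>\<alpha>. is_limit_ord l \<longrightarrow>
        topspace (T l) = (\<Union>\<gamma>\<in>{..<l}. topspace (T \<gamma>)) \<and>
        (\<forall>U. openin (T l) U \<longleftrightarrow>
              U \<subseteq> topspace (T l) \<and> (\<forall>\<gamma><l. openin (T \<gamma>) (U \<inter> topspace (T \<gamma>))))) \<and>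
     (\<forall>\<gamma> \<delta>. \<gamma> \<le> \<delta> \<and> \<delta> \<le> \<alpha> \<longrightarrow> T \<gamma> = subtopology (T \<delta>) (topspace (T \<gamma>)))"

text \<open>rank_k(X) = alpha: least alpha with K_alpha(X) \<cong> K_{alpha+1}(X) = K(K_alpha(X)).\<close>
definition rank_is :: "('u topology \<Rightarrow> 'u set set) \<Rightarrow> 'o::wellorder \<Rightarrow> ('o \<Rightarrow> 'u topology) \<Rightarrow> bool" where
  "rank_is Qk \<alpha> T \<longleftrightarrow>
     (T \<alpha> homeomorphic_space Kspace Qk (T \<alpha>)) \<and>
     (\<forall>\<beta><\<alpha>. \<not> (T \<beta> homeomorphic_space Kspace Qk (T \<beta>)))"

definition has_greatest :: "'a topology \<Rightarrow> bool" where
  "has_greatest X \<longleftrightarrow> (\<exists>g\<in>topspace X. \<forall>x\<in>topspace X. spec_le X x g)"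

definition special :: "('u topology \<Rightarrow> 'u set set) \<Rightarrow> 'o::wellorder \<Rightarrow> ('o \<Rightarrow> 'u topology) \<Rightarrow> bool" where
  "special Qk \<alpha> T \<longleftrightarrow> rank_is Qk \<alpha> T \<and> has_greatest (T \<alpha>) \<and>
     (\<forall>\<beta><\<alpha>. \<not> has_greatest (T \<beta>))"

end

theory Submission
  imports Defs
begin

text \<open>At a limit stage \<open>\<alpha>\<close> every point of \<open>K\<^sub>\<alpha>(X)\<close> already lives in some earlier
  \<open>K\<^sub>\<gamma>(X)\<close>, which is a subspace of \<open>K\<^sub>\<alpha>(X)\<close>. A greatest element of \<open>K\<^sub>\<alpha>(X)\<close> is
  therefore greatest in that subspace as well, contradicting the minimality of \<open>\<alpha>\<close>.\<close>

lemma spec_le_subtopology: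
  "spec_le (subtopology X S) x y \<longleftrightarrow> x \<in> S \<and> y \<in> S \<and> spec_le X x y"
  unfolding spec_le_def by (auto simp: closure_of_subtopology)

lemma has_greatest_subtopology:
  assumes "g \<in> S" "g \<in> topspace X" "\<forall>x\<in>topspace X. spec_le X x g"
  shows "has_greatest (subtopology X S)"
  using assms unfolding has_greatest_def by (auto simp: spec_le_subtopology)

lemma K_tower_topspace_limit:
  assumes "K_tower Qk X \<alpha> T" "is_limit_ord \<alpha>"
  shows "topspace (T \<alpha>) = (\<Union>\<gamma>\<in>{..<\<alpha>}. topspace (T \<gamma>))"
  using assms unfolding K_tower_def by simp

lemma K_tower_subspace:
  assumes "K_tower Qk X \<alpha> T" "\<gamma> \<le> \<alpha>"
  shows "T \<gamma> = subtopology (T \<alpha>) (topspace (T \<gamma>))"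
  using assms unfolding K_tower_def by simp

theorem mainTheorem7:
  fixes Qk :: "'u topology \<Rightarrow> 'u set set"
    and X :: "'u topology"
    and \<alpha> :: "'o::wellorder"
    and T :: "'o \<Rightarrow> 'u topology"
  assumes "K_subset_system Qk"
    and "t0_space X"
    and "K_tower Qk X \<alpha> T"
    and "special Qk \<alpha> T"
  shows "\<not> is_limit_ord \<alpha>"
proof
  assume "is_limit_ord \<alpha>"
  obtain g where g: "g \<in> topspace (T \<alpha>)" "\<forall>x\<in>topspace (T \<alpha>). spec_le (T \<alpha>) x g"
    using assms(4) unfolding special_def has_greatest_def by blast
  with K_tower_topspace_limit[OF assms(3) \<open>is_limit_ord \<alpha>\<close>]
  obtain \<gamma> where "\<gamma> < \<alpha>" "g \<in> topspace (T \<gamma>)" by auto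
  then have "has_greatest (T \<gamma>)"
    using has_greatest_subtopology[OF _ g] K_tower_subspace[OF assms(3), of \<gamma>]
    by (metis less_imp_le)
  with \<open>\<gamma> < \<alpha>\<close> assms(4) show False
    unfolding special_def by blast
qed

end
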